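(* There is a positive existential formula $CO(x)$ in the language $\{0,1,+,\mid,R,T\}$ such that for every prime $p$ and every $n\in\mathbb{Z}$, $\mathfrak{D}_p\models CO(n)$ if and only if $p\nmid n$. That is, the collection of sets $CO_p=\{n\in\mathbb{Z}: p\nmid n\}$ is uniformly positive existentially definable in $\mathcal{D}=\{\mathfrak{D}_p: p \text{ prime}\}$.
   Context: For a prime $p$, $x\mid_p y$ means $y=\pm xp^s$ for some $s\in\mathbb{Z}$. $\mathfrak{D}_p=(\mathbb{Z};0,1,+,\mid,\mid_p,\mathbb{Z}\smallsetminus\{-1,0,1\})$, where $\mid$ is ordinary divisibility, $R$ is interpreted as $\mid_p$, and the unary predicate $T$ as the set $\mathbb{Z}\smallsetminus\{-1,0,1\}$. *)

theory Defs
  imports "HOL-Computational_Algebra.Primes"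
begin

datatype tm = Var nat | Zero | One | Plus tm tm

datatype pefm =
    Eq tm tm
  | Dvd tm tm
  | Rel tm tm
  | Tp tm
  | Conj pefm pefm
  | Disj pefm pefm
  | Ex nat pefm

fun tval :: "(nat \<Rightarrow> int) \<Rightarrow> tm \<Rightarrow> int" where
  "tval e (Var i) = e i"
| "tval e Zero = 0"
| "tval e One = 1"
| "tval e (Plus s t) = tval e s + tval e t"

fun tvars :: "tm \<Rightarrow> nat set" where
  "tvars (Var i) = {i}"
| "tvars Zero = {}"
| "tvars One = {}"
| "tvars (Plus s t) = tvars s \<union> tvars t"

fun fvars :: "pefm \<Rightarrow> nat set" where
  "fvars (Eq s t) = tvars s \<union> tvars t"
| "fvars (Dvd s t) = tvars s \<union> tvars t"
| "fvars (Rel s t) = tvars s \<union> tvars t"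
| "fvars (Tp t) = tvars t"
| "fvars (Conj f g) = fvars f \<union> fvars g"
| "fvars (Disj f g) = fvars f \<union> fvars g"
| "fvars (Ex i f) = fvars f - {i}"

text \<open>x |_p y iff y = \<plusminus> x p^s for some integer s.\<close>
definition pdiv :: "nat \<Rightarrow> int \<Rightarrow> int \<Rightarrow> bool" where
  "pdiv p x y \<longleftrightarrow> (\<exists>s::int. \<exists>\<epsilon>\<in>{1,-1::int}.
      (if s \<ge> 0 then y = \<epsilon> * x * int p ^ nat s else y * int p ^ nat (-s) = \<epsilon> * x))"

text \<open>Satisfaction in the structure D_p = (Z; 0,1,+,|,|_p, Z - {-1,0,1}).\<close>
fun sat :: "nat \<Rightarrow> (nat \<Rightarrow> int) \<Rightarrow> pefm \<Rightarrow> bool" where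
  "sat p e (Eq s t) = (tval e s = tval e t)"
| "sat p e (Dvd s t) = (tval e s dvd tval e t)"
| "sat p e (Rel s t) = pdiv p (tval e s) (tval e t)"
| "sat p e (Tp t) = (tval e t \<notin> {-1, 0, 1})"
| "sat p e (Conj f g) = (sat p e f \<and> sat p e g)"
| "sat p e (Disj f g) = (sat p e f \<or> sat p e g)"
| "sat p e (Ex i f) = (\<exists>a. sat p (e(i := a)) f)"

end

theory Submission
  imports Defs "HOL-Number_Theory.Residues"
begin

text \<open>Take \<open>CO(n)\<close> to say that some \<open>x\<close> with \<open>1 |\<^sub>p x\<close> and \<open>x \<notin> {-1,0,1}\<close>
  satisfies \<open>n | x - 1\<close>. Such \<open>x\<close> are exactly \<open>\<plusminus>p^k\<close> with \<open>k > 0\<close>, so \<open>p | x\<close> and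
  \<open>p\<close> cannot divide \<open>n\<close>. Conversely, if \<open>p\<close> does not divide \<open>n\<close>, Euler's theorem gives
  \<open>n | p^\<phi>(|n|) - 1\<close>.\<close>

lemma pdiv_one_iff: "pdiv p 1 x \<longleftrightarrow> (\<exists>k. x = int p ^ k \<or> x = - (int p ^ k))"
proof
  assume "pdiv p 1 x"
  then obtain s and \<epsilon> :: int where \<epsilon>: "\<epsilon> \<in> {1, -1}" and
    x: "if s \<ge> 0 then x = \<epsilon> * 1 * int p ^ nat s else x * int p ^ nat (-s) = \<epsilon> * 1"
    unfolding pdiv_def by blast
  show "\<exists>k. x = int p ^ k \<or> x = - (int p ^ k)"
  proof (cases "s \<ge> 0")
    case True
    then show ?thesis using x \<epsilon> by auto
  next
    case False
    then have "x * int p ^ nat (-s) = \<epsilon>" using x by simp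
    then have "int p ^ nat (-s) dvd \<epsilon>" by (metis dvd_triv_right)
    moreover have "is_unit \<epsilon>" using \<epsilon> by auto
    ultimately have "is_unit (int p ^ nat (-s))" by (rule dvd_unit_imp_unit)
    then have "int p ^ nat (-s) = 1" by simp
    then have "p ^ nat (-s) = 1" by (metis of_nat_1 of_nat_eq_iff of_nat_power)
    then have "p = 1" using False by (simp add: power_eq_1_iff)
    then show ?thesis using x \<epsilon> False by auto
  qed
next
  assume "\<exists>k. x = int p ^ k \<or> x = - (int p ^ k)"
  then obtain k where "x = int p ^ k \<or> x = - (int p ^ k)" by blast
  then show "pdiv p 1 x"
    unfolding pdiv_def by (intro exI[of _ "int k"]) auto
qed

lemma pdiv_one_nontrivial_imp_dvd:
  assumes "pdiv p 1 x" and "x \<notin> {-1, 0, 1}"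
  shows "int p dvd x"
proof -
  obtain k where k: "x = int p ^ k \<or> x = - (int p ^ k)"
    using assms(1) pdiv_one_iff by blast
  with assms(2) have "k \<noteq> 0" by (cases "k = 0") auto
  with k show ?thesis by (auto simp: dvd_power)
qed

lemma coprime_imp_dvd_power_minus_one:
  fixes a :: nat and n :: int
  assumes "coprime (int a) n" and "n \<noteq> 0"
  shows "\<exists>k>0. n dvd int a ^ k - 1"
proof -
  define m where "m = nat \<bar>n\<bar>"
  have "coprime a m"
    using assms(1) unfolding m_def
    by (metis coprime_abs_right_iff coprime_int_iff int_nat_eq abs_ge_zero)
  then have "[a ^ totient m = 1] (mod m)" by (rule euler_theorem)
  then have "[int a ^ totient m = 1] (mod int m)"
    by (metis cong_int_iff of_nat_1 of_nat_power)
  then have "n dvd int a ^ totient m - 1"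
    unfolding m_def by (simp add: cong_iff_dvd_diff)
  moreover have "totient m > 0" using assms(2) m_def by simp
  ultimately show ?thesis by blast
qed

lemma prime_not_dvd_iff_dvd_pdiv_one_minus_one:
  assumes "prime p"
  shows "\<not> int p dvd n \<longleftrightarrow> (\<exists>x. pdiv p 1 x \<and> x \<notin> {-1, 0, 1} \<and> n dvd x - 1)"
proof
  assume "\<not> int p dvd n"
  moreover have "prime (int p)" using assms by simp
  ultimately have "coprime (int p) n" "n \<noteq> 0" by (auto simp: prime_imp_coprime)
  then obtain k where k: "k > 0" "n dvd int p ^ k - 1"
    using coprime_imp_dvd_power_minus_one by blast
  have "int p \<ge> 2" using prime_ge_2_nat[OF assms] by simp
  moreover have "int p ^ k \<ge> int p" using self_le_power[of "int p" k] k(1) \<open>int p \<ge> 2\<close> by simp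
  ultimately have "int p ^ k \<ge> 2" by linarith
  then have "int p ^ k \<notin> {-1, 0, 1}" by (smt (verit) insert_iff singletonD)
  then show "\<exists>x. pdiv p 1 x \<and> x \<notin> {-1, 0, 1} \<and> n dvd x - 1"
    using k(2) pdiv_one_iff by blast
next
  assume "\<exists>x. pdiv p 1 x \<and> x \<notin> {-1, 0, 1} \<and> n dvd x - 1"
  then obtain x where x: "int p dvd x" "n dvd x - 1"
    using pdiv_one_nontrivial_imp_dvd by blast
  show "\<not> int p dvd n"
  proof
    assume "int p dvd n"
    then have "int p dvd x - 1" using x(2) by (rule dvd_trans)
    then have "int p dvd 1" using dvd_diff[OF x(1)] by fastforce
    then show False using assms by simp
  qed
qed

theorem lemma4p10:
  shows "\<exists>CO :: pefm. fvars CO \<subseteq> {0} \<and>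
     (\<forall>p::nat. prime p \<longrightarrow> (\<forall>n::int. sat p (\<lambda>_. n) CO \<longleftrightarrow> \<not> int p dvd n))"
proof (intro exI conjI allI impI)
  let ?CO = "Ex 1 (Ex 2 (Conj (Conj (Rel One (Var 1)) (Tp (Var 1)))
               (Conj (Eq (Plus (Var 2) One) (Var 1)) (Dvd (Var 0) (Var 2)))))"
  show "fvars ?CO \<subseteq> {0}" by auto
  fix p :: nat and n :: int
  assume "prime p"
  have "sat p (\<lambda>_. n) ?CO \<longleftrightarrow> (\<exists>x y. pdiv p 1 x \<and> x \<notin> {-1, 0, 1} \<and> y + 1 = x \<and> n dvd y)"
    by simp
  also have "\<dots> \<longleftrightarrow> (\<exists>x. pdiv p 1 x \<and> x \<notin> {-1, 0, 1} \<and> n dvd x - 1)"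
    by (metis add_diff_cancel_right' diff_add_cancel)
  also have "\<dots> \<longleftrightarrow> \<not> int p dvd n"
    using prime_not_dvd_iff_dvd_pdiv_one_minus_one[OF \<open>prime p\<close>] by simp
  finally show "sat p (\<lambda>_. n) ?CO \<longleftrightarrow> \<not> int p dvd n" .
qed

end
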